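(* Let $V=\{a_1,\ldots,a_n\}$ be a set of propositional variables, $\mathcal{R}$ be a set of transition rules on $V$, $F$ be a CTL formula and let $s \models_{\mathcal{R}} F$ denote that $F$ holds at state $s$ in the transition system defined by $\mathcal{R}$. Then $s \models_{\mathcal{R}} F$ iff the sequent $\vdash \llbracket s\rrbracket, [\![F]\!]_{\mathcal{R}}$ is provable in $\mu$MALL.
   Context: $\mu$MALL is multiplicative-additive linear logic extended with least ($\mu$) and greatest ($\nu$) fixed points, with the unfolding rule for $\mu$ and the (co)induction rule for $\nu$ using an invariant. Below $\&$ is additive conjunction (with), $\bigoplus$/$\oplus$ additive disjunction, $\otimes$ multiplicative conjunction, and ⅋ multiplicative disjunction (par). A state $s$ over $V$ is a valuation $V\to\{\mathrm{true},\mathrm{false}\}$, written as a conjunction $p_1(a_1)\wedge\cdots\wedge p_n(a_n)$ with each $p_i$ either "present" ($s(a_i)=\mathrm{true}$) or "absent" ($s(a_i)=\mathrm{false}$). Transition rules have the form $r: s\to s'$, enabling the transition from $s$ to $s'$; the transition system is assumed serial. CTL formulas: $F ::= p \mid F\wedge F\mid F\vee F\mid \mathbf{Q}\mathsf{X}F\mid \mathbf{Q}\mathsf{F}F\mid \mathbf{Q}\mathsf{G}F\mid \mathbf{Q}[F\,\mathsf{U}\,F]$ with $\mathbf{Q}\in\{\mathsf{A},\mathsf{E}\}$ and $p$ a state formula. Encoding: $\llbracket \text{present}(a_i)\rrbracket = a_i$, $\llbracket \text{absent}(a_i)\rrbracket = a_i^\perp$; $\llbracket s\rrbracket = \llbracket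 p_1(a_1)\rrbracket^\perp$ ⅋ $\cdots$ ⅋ $\llbracket p_n(a_n)\rrbracket^\perp$; $\mathrm{pos}(s) = \llbracket p_1(a_1)\rrbracket\otimes\cdots\otimes\llbracket p_n(a_n)\rrbracket = \llbracket s\rrbracket^\perp$; $\mathrm{neg}(s) = (\llbracket p_1(a_1)\rrbracket^\perp\otimes\top)\oplus\cdots\oplus(\llbracket p_n(a_n)\rrbracket^\perp\otimes\top)$; a state formula $p$ is encoded as $\mathrm{pos}(p)$ (variables not occurring in $p$ giving $\top$); CTL $\wedge,\vee$ map to $\&,\oplus$. With $\phi=[\![F]\!]_{\mathcal{R}}$, $\psi=[\![G]\!]_{\mathcal{R}}$, and $T_{\mathsf{A}}(Y) = \mathop{\&}_{s\to s'\in\mathcal{R}}\big(\mathrm{neg}(s)\oplus(\mathrm{pos}(s)\otimes(\llbracket s'\rrbracket$ ⅋ $Y))\big)$, $T_{\mathsf{E}}(Y)=\bigoplus_{s\to s'\in\mathcal{R}}\big(\mathrm{pos}(s)\otimes(\llbracket s'\rrbracket$ ⅋ $Y)\big)$: $[\![\mathsf{AX}F]\!]=T_{\mathsf{A}}(\phi)$, $[\![\mathsf{EX}F]\!]=T_{\mathsf{E}}(\phi)$, $[\![\mathsf{AF}F]\!]=\mu Y.\,\phi\oplus T_{\mathsf{A}}(Y)$, $[\![\mathsf{EF}F]\!]=\mu Y.\,\phi\oplus T_{\mathsf{E}}(Y)$, $[\![\mathsf{AG}F]\!]=\nu Y.\,\phi\,\&\,T_{\mathsf{A}}(Y)$, $[\![\mathsf{EG}F]\!]=\nu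 Y.\,\phi\,\&\,T_{\mathsf{E}}(Y)$, $[\![\mathsf{A}[F\,\mathsf{U}\,G]]\!]=\mu Y.\,\psi\oplus(\phi\,\&\,T_{\mathsf{A}}(Y))$, $[\![\mathsf{E}[F\,\mathsf{U}\,G]]\!]=\mu Y.\,\psi\oplus(\phi\,\&\,T_{\mathsf{E}}(Y))$. *)

theory Defs
  imports Main "HOL-Library.Multiset"
begin

datatype 'a form =
    Atom 'a | NAtom 'a
  | One | Bot | Top | Zero
  | Tensor "'a form" "'a form" | Par "'a form" "'a form"
  | With "'a form" "'a form" | Plus "'a form" "'a form"
  | Mu "'a form" | Nu "'a form"
  | Var nat

text \<open>Negation (De Morgan duality). Bound variables stay positive:
  (mu B)^perp = nu (B^perp) with the bound variable unchanged.\<close>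
fun dual :: "'a form \<Rightarrow> 'a form" where
  "dual (Atom a) = NAtom a"
| "dual (NAtom a) = Atom a"
| "dual One = Bot"
| "dual Bot = One"
| "dual Top = Zero"
| "dual Zero = Top"
| "dual (Tensor A B) = Par (dual A) (dual B)"
| "dual (Par A B) = Tensor (dual A) (dual B)"
| "dual (With A B) = Plus (dual A) (dual B)"
| "dual (Plus A B) = With (dual A) (dual B)"
| "dual (Mu B) = Nu (dual B)"
| "dual (Nu B) = Mu (dual B)"
| "dual (Var i) = Var i"

fun lift :: "nat \<Rightarrow> 'a form \<Rightarrow> 'a form" where
  "lift k (Var i) = (if i < k then Var i else Var (Suc i))"
| "lift k (Tensor A B) = Tensor (lift k A) (lift k B)"
| "lift k (Par A B) = Par (lift k A) (lift k B)"
| "lift k (With A B) = With (lift k A) (lift k B)"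
| "lift k (Plus A B) = Plus (lift k A) (lift k B)"
| "lift k (Mu B) = Mu (lift (Suc k) B)"
| "lift k (Nu B) = Nu (lift (Suc k) B)"
| "lift k A = A"

fun subst :: "nat \<Rightarrow> 'a form \<Rightarrow> 'a form \<Rightarrow> 'a form" where
  "subst k t (Var i) = (if i < k then Var i else if i = k then t else Var (i - 1))"
| "subst k t (Tensor A B) = Tensor (subst k t A) (subst k t B)"
| "subst k t (Par A B) = Par (subst k t A) (subst k t B)"
| "subst k t (With A B) = With (subst k t A) (subst k t B)"
| "subst k t (Plus A B) = Plus (subst k t A) (subst k t B)"
| "subst k t (Mu B) = Mu (subst (Suc k) (lift 0 t) B)"
| "subst k t (Nu B) = Nu (subst (Suc k) (lift 0 t) B)"
| "subst k t A = A"

inductive prov :: "'a form multiset \<Rightarrow> bool" where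
  init: "prov {# Atom a, NAtom a #}"
| cut: "prov (add_mset A \<Gamma>) \<Longrightarrow> prov (add_mset (dual A) \<Delta>) \<Longrightarrow> prov (\<Gamma> + \<Delta>)"
| one: "prov {# One #}"
| bot: "prov \<Gamma> \<Longrightarrow> prov (add_mset Bot \<Gamma>)"
| top: "prov (add_mset Top \<Gamma>)"
| tensor: "prov (add_mset A \<Gamma>) \<Longrightarrow> prov (add_mset B \<Delta>) \<Longrightarrow> prov (add_mset (Tensor A B) (\<Gamma> + \<Delta>))"
| par: "prov (add_mset A (add_mset B \<Gamma>)) \<Longrightarrow> prov (add_mset (Par A B) \<Gamma>)"
| with_r: "prov (add_mset A \<Gamma>) \<Longrightarrow> prov (add_mset B \<Gamma>) \<Longrightarrow> prov (add_mset (With A B) \<Gamma>)"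
| plus1: "prov (add_mset A \<Gamma>) \<Longrightarrow> prov (add_mset (Plus A B) \<Gamma>)"
| plus2: "prov (add_mset B \<Gamma>) \<Longrightarrow> prov (add_mset (Plus A B) \<Gamma>)"
| mu: "prov (add_mset (subst 0 (Mu B) B) \<Gamma>) \<Longrightarrow> prov (add_mset (Mu B) \<Gamma>)"
| nu: "prov (add_mset S \<Gamma>) \<Longrightarrow> prov {# dual S, subst 0 S B #} \<Longrightarrow> prov (add_mset (Nu B) \<Gamma>)"

fun bigop :: "('a form \<Rightarrow> 'a form \<Rightarrow> 'a form) \<Rightarrow> 'a form \<Rightarrow> 'a form list \<Rightarrow> 'a form" where
  "bigop f u [] = u"
| "bigop f u [x] = x"
| "bigop f u (x # xs) = f x (bigop f u xs)"

abbreviation "bigTensor \<equiv> bigop Tensor One"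
abbreviation "bigPar \<equiv> bigop Par Bot"
abbreviation "bigWith \<equiv> bigop With Top"
abbreviation "bigPlus \<equiv> bigop Plus Zero"

type_synonym 'a state = "'a \<Rightarrow> bool"
type_synonym 'a rule = "'a state \<times> 'a state"
text \<open>A state formula: a conjunction of present/absent literals on some of the variables
  (None = variable does not occur).\<close>
type_synonym 'a sformula = "'a \<Rightarrow> bool option"

definition trans :: "'a list \<Rightarrow> 'a rule list \<Rightarrow> 'a state \<Rightarrow> 'a state \<Rightarrow> bool" where
  "trans V R s t \<longleftrightarrow> (\<exists>(r, r') \<in> set R. (\<forall>a\<in>set V. s a = r a) \<and> (\<forall>a\<in>set V. t a = r' a))"

definition serial :: "'a list \<Rightarrow> 'a rule list \<Rightarrow> bool" where
  "serial V R \<longleftrightarrow> (\<forall>s. \<exists>t. trans V R s t)"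

definition is_path :: "'a list \<Rightarrow> 'a rule list \<Rightarrow> 'a state \<Rightarrow> (nat \<Rightarrow> 'a state) \<Rightarrow> bool" where
  "is_path V R s \<pi> \<longleftrightarrow> \<pi> 0 = s \<and> (\<forall>i. trans V R (\<pi> i) (\<pi> (Suc i)))"

datatype 'a ctl =
    SF "'a sformula"
  | CAnd "'a ctl" "'a ctl" | COr "'a ctl" "'a ctl"
  | CAX "'a ctl" | CEX "'a ctl"
  | CAF "'a ctl" | CEF "'a ctl"
  | CAG "'a ctl" | CEG "'a ctl"
  | CAU "'a ctl" "'a ctl" | CEU "'a ctl" "'a ctl"

fun models :: "'a list \<Rightarrow> 'a rule list \<Rightarrow> 'a state \<Rightarrow> 'a ctl \<Rightarrow> bool" where
  "models V R s (SF p) = (\<forall>a\<in>set V. \<forall>b. p a = Some b \<longrightarrow> s a = b)"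
| "models V R s (CAnd F G) = (models V R s F \<and> models V R s G)"
| "models V R s (COr F G) = (models V R s F \<or> models V R s G)"
| "models V R s (CAX F) = (\<forall>t. trans V R s t \<longrightarrow> models V R t F)"
| "models V R s (CEX F) = (\<exists>t. trans V R s t \<and> models V R t F)"
| "models V R s (CAF F) = (\<forall>\<pi>. is_path V R s \<pi> \<longrightarrow> (\<exists>i. models V R (\<pi> i) F))"
| "models V R s (CEF F) = (\<exists>\<pi>. is_path V R s \<pi> \<and> (\<exists>i. models V R (\<pi> i) F))"
| "models V R s (CAG F) = (\<forall>\<pi>. is_path V R s \<pi> \<longrightarrow> (\<forall>i. models V R (\<pi> i) F))"
| "models V R s (CEG F) = (\<exists>\<pi>. is_path V R s \<pi> \<and> (\<forall>i. models V R (\<pi> i) F))"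
| "models V R s (CAU F G) = (\<forall>\<pi>. is_path V R s \<pi> \<longrightarrow>
      (\<exists>i. models V R (\<pi> i) G \<and> (\<forall>j<i. models V R (\<pi> j) F)))"
| "models V R s (CEU F G) = (\<exists>\<pi>. is_path V R s \<pi> \<and>
      (\<exists>i. models V R (\<pi> i) G \<and> (\<forall>j<i. models V R (\<pi> j) F)))"

definition lit :: "'a \<Rightarrow> bool \<Rightarrow> 'a form" where
  "lit a b = (if b then Atom a else NAtom a)"

definition enc_state :: "'a list \<Rightarrow> 'a state \<Rightarrow> 'a form" where
  "enc_state V s = bigPar (map (\<lambda>a. dual (lit a (s a))) V)"

definition pos :: "'a list \<Rightarrow> 'a state \<Rightarrow> 'a form" where
  "pos V s = bigTensor (map (\<lambda>a. lit a (s a)) V)"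

definition neg :: "'a list \<Rightarrow> 'a state \<Rightarrow> 'a form" where
  "neg V s = bigPlus (map (\<lambda>a. Tensor (dual (lit a (s a))) Top) V)"

definition pos_sf :: "'a list \<Rightarrow> 'a sformula \<Rightarrow> 'a form" where
  "pos_sf V p = bigTensor (map (\<lambda>a. case p a of None \<Rightarrow> Top | Some b \<Rightarrow> lit a b) V)"

definition TA :: "'a list \<Rightarrow> 'a rule list \<Rightarrow> 'a form \<Rightarrow> 'a form" where
  "TA V R Y = bigWith (map (\<lambda>(s, s'). Plus (neg V s) (Tensor (pos V s) (Par (enc_state V s') Y))) R)"

definition TE :: "'a list \<Rightarrow> 'a rule list \<Rightarrow> 'a form \<Rightarrow> 'a form" where
  "TE V R Y = bigPlus (map (\<lambda>(s, s'). Tensor (pos V s) (Par (enc_state V s') Y)) R)"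

text \<open>Var 0 is the fixed point variable Y; closed encodings are lifted when put under a binder.\<close>
fun enc :: "'a list \<Rightarrow> 'a rule list \<Rightarrow> 'a ctl \<Rightarrow> 'a form" where
  "enc V R (SF p) = pos_sf V p"
| "enc V R (CAnd F G) = With (enc V R F) (enc V R G)"
| "enc V R (COr F G) = Plus (enc V R F) (enc V R G)"
| "enc V R (CAX F) = TA V R (enc V R F)"
| "enc V R (CEX F) = TE V R (enc V R F)"
| "enc V R (CAF F) = Mu (Plus (lift 0 (enc V R F)) (TA V R (Var 0)))"
| "enc V R (CEF F) = Mu (Plus (lift 0 (enc V R F)) (TE V R (Var 0)))"
| "enc V R (CAG F) = Nu (With (lift 0 (enc V R F)) (TA V R (Var 0)))"
| "enc V R (CEG F) = Nu (With (lift 0 (enc V R F)) (TE V R (Var 0)))"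
| "enc V R (CAU F G) = Mu (Plus (lift 0 (enc V R G)) (With (lift 0 (enc V R F)) (TA V R (Var 0))))"
| "enc V R (CEU F G) = Mu (Plus (lift 0 (enc V R G)) (With (lift 0 (enc V R F)) (TE V R (Var 0))))"

end

(*
  Truth implies provability by induction on the formula.  The least fixed points of AF, EF, AU
  and EU are unfolded along the corresponding inductive characterisations of CTL, and for AG and
  EG the nu-rule is applied with the invariant given by the sum of the positive encodings of all
  states satisfying the formula, a finite sum because states are only observed on V.

  Provability implies truth by a phase model of muMALL.  Its resources place literals and probes
  on the variables; a literal cancels against exactly one probe of the same polarity.  By
  induction on F, whenever F fails at s, the probe of s lies in the interpretation of the negation
  of [[F]]; the literals of s lie in the interpretation of the negation of [[s]].  Soundness of
  phase semantics would put their sum into the pole, but the literals of s exactly cancel the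
  probe of s.
*)

theory Submission
  imports Defs "HOL-Library.Set_Algebras" "HOL-Library.Function_Algebras" "HOL-Library.Product_Plus"
begin

section \<open>Duality and substitution on the encodings\<close>

lemma dual_lift: "dual (lift k A) = lift k (dual A)"
  by (induction A arbitrary: k) simp_all

lemma subst_lift [simp]: "subst k t (lift k A) = A"
  by (induction A arbitrary: k t) simp_all

lemma bigop_map:
  "(\<And>a b. g (f a b) = f' (g a) (g b)) \<Longrightarrow> g u = u' \<Longrightarrow> g (bigop f u xs) = bigop f' u' (map g xs)"
  by (induction xs rule: induct_list012) simp_all

lemma dual_bigTensor: "dual (bigTensor xs) = bigPar (map dual xs)"
  and dual_bigPar: "dual (bigPar xs) = bigTensor (map dual xs)"
  and dual_bigWith: "dual (bigWith xs) = bigPlus (map dual xs)"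
  and dual_bigPlus: "dual (bigPlus xs) = bigWith (map dual xs)"
  by (rule bigop_map; simp)+

lemma dual_lit [simp]: "dual (lit a b) = lit a (\<not> b)"
  by (simp add: lit_def)

lemma dual_pos: "dual (pos V s) = enc_state V s"
  by (simp add: pos_def enc_state_def dual_bigTensor comp_def)

lemma dual_enc_state: "dual (enc_state V s) = pos V s"
  by (simp add: pos_def enc_state_def dual_bigPar comp_def)

lemma dual_neg: "dual (neg V s) = bigWith (map (\<lambda>a. Par (lit a (s a)) Zero) V)"
  by (simp add: neg_def dual_bigPlus comp_def)

lemma dual_TA: "dual (TA V R Y) =
    bigPlus (map (\<lambda>(r, r'). With (dual (neg V r)) (Par (enc_state V r) (Tensor (pos V r') (dual Y)))) R)"
  by (simp add: TA_def dual_bigWith comp_def split_def dual_pos dual_enc_state)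

lemma dual_TE: "dual (TE V R Y) =
    bigWith (map (\<lambda>(r, r'). Par (enc_state V r) (Tensor (pos V r') (dual Y))) R)"
  by (simp add: TE_def dual_bigPlus comp_def split_def dual_pos dual_enc_state)

lemma dual_pos_sf: "dual (pos_sf V p) =
    bigPar (map (\<lambda>a. dual (case p a of None \<Rightarrow> Top | Some b \<Rightarrow> lit a b)) V)"
  by (simp add: pos_sf_def dual_bigTensor comp_def)

lemma subst_lit [simp]: "subst k t (lit a b) = lit a b"
  by (simp add: lit_def)

lemma subst_pos [simp]: "subst k t (pos V s) = pos V s"
  and subst_enc_state [simp]: "subst k t (enc_state V s) = enc_state V s"
  and subst_neg [simp]: "subst k t (neg V s) = neg V s"
  by (simp_all add: pos_def enc_state_def neg_def bigop_map[where g = "subst k t"] comp_def)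

lemma subst_TA [simp]: "subst k t (TA V R Y) = TA V R (subst k t Y)"
  by (simp add: TA_def bigop_map[where g = "subst k t"] comp_def split_def)

lemma subst_TE [simp]: "subst k t (TE V R Y) = TE V R (subst k t Y)"
  by (simp add: TE_def bigop_map[where g = "subst k t"] comp_def split_def)

section \<open>Phase semantics of muMALL\<close>

definition env_ins :: "nat \<Rightarrow> 'b \<Rightarrow> (nat \<Rightarrow> 'b) \<Rightarrow> nat \<Rightarrow> 'b" where
  "env_ins k X \<rho> = (\<lambda>i. if i < k then \<rho> i else if i = k then X else \<rho> (i - 1))"

lemma env_ins_0_0 [simp]: "env_ins 0 X \<rho> 0 = X"
  by (simp add: env_ins_def)

lemma env_ins_Suc_0: "env_ins (Suc k) Y (env_ins 0 X \<rho>) = env_ins 0 X (env_ins k Y \<rho>)"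
  by (rule ext) (auto simp: env_ins_def)

lemma env_ins_mono:
  "(\<And>i. \<rho> i \<subseteq> \<rho>' i) \<Longrightarrow> X \<subseteq> X' \<Longrightarrow> env_ins k X \<rho> i \<subseteq> env_ins k X' \<rho>' i"
  by (simp add: env_ins_def)

locale phase_space =
  fixes pole :: "'m::comm_monoid_add set"
    and atom :: "'a \<Rightarrow> 'm set"
begin

definition orth :: "'m set \<Rightarrow> 'm set" where
  "orth X = {y. \<forall>x\<in>X. x + y \<in> pole}"

definition is_fact :: "'m set \<Rightarrow> bool" where
  "is_fact X \<longleftrightarrow> orth (orth X) = X"

lemma orth_iff: "y \<in> orth X \<longleftrightarrow> (\<forall>x\<in>X. x + y \<in> pole)"
  by (simp add: orth_def)

lemma orth_antimono: "X \<subseteq> Y \<Longrightarrow> orth Y \<subseteq> orth X"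
  by (auto simp: orth_def)

lemma subset_orth_swap: "X \<subseteq> orth Y \<longleftrightarrow> Y \<subseteq> orth X"
  unfolding orth_def subset_iff mem_Collect_eq by (metis add.commute)

lemma subset_biorth: "X \<subseteq> orth (orth X)"
  using subset_orth_swap by blast

lemma orth_orth_orth [simp]: "orth (orth (orth X)) = orth X"
  by (meson orth_antimono subset_biorth subset_antisym)

lemma is_fact_orth [simp]: "is_fact (orth X)"
  by (simp add: is_fact_def)

lemma biorth_fact: "is_fact X \<Longrightarrow> orth (orth X) = X"
  by (simp add: is_fact_def)

lemma orth_subset_fact_iff: "is_fact X \<Longrightarrow> is_fact Y \<Longrightarrow> orth X \<subseteq> orth Y \<longleftrightarrow> Y \<subseteq> X"
  by (metis biorth_fact orth_antimono)

lemma orth_Un: "orth (X \<union> Y) = orth X \<inter> orth Y"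
  by (auto simp: orth_def)

lemma orth_Union: "orth (\<Union> S) = (\<Inter>X\<in>S. orth X)"
  by (auto simp: orth_def)

lemma is_fact_Inter: "(\<And>X. X \<in> S \<Longrightarrow> is_fact X) \<Longrightarrow> is_fact (\<Inter> S)"
proof -
  assume "\<And>X. X \<in> S \<Longrightarrow> is_fact X"
  then have "\<Inter> S = orth (\<Union>X\<in>S. orth X)"
    by (simp add: orth_Union biorth_fact)
  then show ?thesis
    by simp
qed

lemma is_fact_Int: "is_fact X \<Longrightarrow> is_fact Y \<Longrightarrow> is_fact (X \<inter> Y)"
  using is_fact_Inter[of "{X, Y}"] by auto

lemma is_fact_UNIV [simp]: "is_fact UNIV"
  using is_fact_Inter[of "{}"] by simp

lemma facts_reindex: "{X. is_fact X \<and> P X} = orth ` {Y. is_fact Y \<and> P (orth Y)}"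
proof
  show "{X. is_fact X \<and> P X} \<subseteq> orth ` {Y. is_fact Y \<and> P (orth Y)}"
  proof
    fix X assume "X \<in> {X. is_fact X \<and> P X}"
    then have "X = orth (orth X)" and "orth X \<in> {Y. is_fact Y \<and> P (orth Y)}"
      by (simp_all add: biorth_fact)
    then show "X \<in> orth ` {Y. is_fact Y \<and> P (orth Y)}"
      by blast
  qed
qed auto

lemma plus_subset_pole_iff: "X + Y \<subseteq> pole \<longleftrightarrow> Y \<subseteq> orth X"
  by (auto simp: orth_def set_plus_def)

lemma plus_subset_orth_iff: "X + Y \<subseteq> orth Z \<longleftrightarrow> Y \<subseteq> orth (X + Z)"
  by (simp add: plus_subset_pole_iff[symmetric] subset_orth_swap ac_simps)

lemma orth_plus_biorth: "orth (orth (orth X) + Y) = orth (X + Y)"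
proof -
  have "z \<in> orth (W + Y) \<longleftrightarrow> Y + {z} \<subseteq> orth W" for W z
  proof -
    have "z \<in> orth (W + Y) \<longleftrightarrow> Y + W \<subseteq> orth {z}"
      using subset_orth_swap[of "{z}"] by (simp add: add.commute)
    also have "\<dots> \<longleftrightarrow> Y + {z} \<subseteq> orth W"
      by (simp add: plus_subset_orth_iff subset_orth_swap)
    finally show ?thesis .
  qed
  then show ?thesis
    by auto
qed

lemma biorth_mono: "X \<subseteq> Y \<Longrightarrow> orth (orth X) \<subseteq> orth (orth Y)"
  by (intro orth_antimono)

primrec sem :: "(nat \<Rightarrow> 'm set) \<Rightarrow> 'a form \<Rightarrow> 'm set" where
  "sem \<rho> (Atom a) = orth (orth (atom a))"
| "sem \<rho> (NAtom a) = orth (atom a)"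
| "sem \<rho> One = orth (orth {0})"
| "sem \<rho> Bot = orth {0}"
| "sem \<rho> Top = UNIV"
| "sem \<rho> Zero = orth UNIV"
| "sem \<rho> (Tensor A B) = orth (orth (sem \<rho> A + sem \<rho> B))"
| "sem \<rho> (Par A B) = orth (orth (sem \<rho> A) + orth (sem \<rho> B))"
| "sem \<rho> (With A B) = sem \<rho> A \<inter> sem \<rho> B"
| "sem \<rho> (Plus A B) = orth (orth (sem \<rho> A \<union> sem \<rho> B))"
| "sem \<rho> (Mu B) = \<Inter> {X. is_fact X \<and> sem (env_ins 0 X \<rho>) B \<subseteq> X}"
| "sem \<rho> (Nu B) = orth (orth (\<Union> {X. is_fact X \<and> X \<subseteq> sem (env_ins 0 X \<rho>) B}))"
| "sem \<rho> (Var i) = \<rho> i"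

definition fact_env :: "(nat \<Rightarrow> 'm set) \<Rightarrow> bool" where
  "fact_env \<rho> \<longleftrightarrow> (\<forall>i. is_fact (\<rho> i))"

lemma fact_env_ins: "fact_env \<rho> \<Longrightarrow> is_fact X \<Longrightarrow> fact_env (env_ins k X \<rho>)"
  by (simp add: fact_env_def env_ins_def)

lemma is_fact_sem: "fact_env \<rho> \<Longrightarrow> is_fact (sem \<rho> A)"
  by (induction A arbitrary: \<rho>) (auto simp: is_fact_Int fact_env_ins fact_env_def intro!: is_fact_Inter)

lemma sem_mono: "(\<And>i. \<rho> i \<subseteq> \<rho>' i) \<Longrightarrow> sem \<rho> A \<subseteq> sem \<rho>' A"
proof (induction A arbitrary: \<rho> \<rho>')
  case (Tensor A B)
  then show ?case
    by (simp add: biorth_mono set_plus_mono2)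
next
  case (Par A B)
  then show ?case
    by (simp add: orth_antimono set_plus_mono2)
next
  case (With A B)
  then have "sem \<rho> A \<subseteq> sem \<rho>' A" and "sem \<rho> B \<subseteq> sem \<rho>' B"
    by blast+
  then show ?case
    by auto
next
  case (Plus A B)
  then have "sem \<rho> A \<union> sem \<rho> B \<subseteq> sem \<rho>' A \<union> sem \<rho>' B"
    by (meson Un_mono)
  then show ?case
    by (simp add: biorth_mono)
next
  case (Mu B)
  then have "sem (env_ins 0 X \<rho>) B \<subseteq> sem (env_ins 0 X \<rho>') B" for X
    by (simp add: env_ins_mono)
  then have "{X. is_fact X \<and> sem (env_ins 0 X \<rho>') B \<subseteq> X} \<subseteq> {X. is_fact X \<and> sem (env_ins 0 X \<rho>) B \<subseteq> X}"
    by blast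
  then show ?case
    by (simp add: Inter_anti_mono)
next
  case (Nu B)
  then have "sem (env_ins 0 X \<rho>) B \<subseteq> sem (env_ins 0 X \<rho>') B" for X
    by (simp add: env_ins_mono)
  then have "\<Union> {X. is_fact X \<and> X \<subseteq> sem (env_ins 0 X \<rho>) B}
      \<subseteq> \<Union> {X. is_fact X \<and> X \<subseteq> sem (env_ins 0 X \<rho>') B}"
    by blast
  then show ?case
    by (simp add: biorth_mono)
qed auto

lemma sem_lift: "sem (env_ins k X \<rho>) (lift k A) = sem \<rho> A"
  by (induction A arbitrary: k \<rho>) (simp_all add: env_ins_Suc_0[symmetric], simp add: env_ins_def)

lemma sem_subst: "sem \<rho> (subst k t A) = sem (env_ins k (sem \<rho> t) \<rho>) A"
  by (induction A arbitrary: k t \<rho>)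
    (simp_all add: sem_lift env_ins_Suc_0, simp add: env_ins_def)

lemma env_ins_orth: "is_fact X \<Longrightarrow> env_ins 0 X (orth \<circ> \<rho>) = orth \<circ> env_ins 0 (orth X) \<rho>"
  by (rule ext) (simp add: env_ins_def biorth_fact)

lemma sem_dual: "fact_env \<rho> \<Longrightarrow> sem (orth \<circ> \<rho>) (dual A) = orth (sem \<rho> A)"
proof (induction A arbitrary: \<rho>)
  case Zero
  show ?case
    by (simp add: biorth_fact)
next
  case (Tensor A B)
  then show ?case
    by (simp add: biorth_fact is_fact_sem)
next
  case (Par A B)
  then show ?case
    by (simp add: biorth_fact is_fact_sem)
next
  case (With A B)
  then have "orth (orth (sem \<rho> A) \<union> orth (sem \<rho> B)) = sem \<rho> A \<inter> sem \<rho> B"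
    by (simp add: orth_Un biorth_fact is_fact_sem)
  with With show ?case
    by simp
next
  case (Plus A B)
  then show ?case
    by (simp add: orth_Un biorth_fact is_fact_Int)
next
  case (Mu B)
  have dual_body: "sem (env_ins 0 X (orth \<circ> \<rho>)) (dual B) = orth (sem (env_ins 0 (orth X) \<rho>) B)"
    if "is_fact X" for X
    using Mu fact_env_ins[OF Mu.prems is_fact_orth] by (simp only: env_ins_orth[OF that])
  let ?Q = "{Y. is_fact Y \<and> sem (env_ins 0 Y \<rho>) B \<subseteq> Y}"
  have "{X. is_fact X \<and> X \<subseteq> sem (env_ins 0 X (orth \<circ> \<rho>)) (dual B)} = orth ` ?Q"
    by (subst facts_reindex)
      (simp add: dual_body biorth_fact orth_subset_fact_iff is_fact_sem fact_env_ins Mu.prems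
        cong: conj_cong)
  then show ?case
    by (simp add: orth_Union image_image biorth_fact comp_def)
next
  case (Nu B)
  have dual_body: "sem (env_ins 0 X (orth \<circ> \<rho>)) (dual B) = orth (sem (env_ins 0 (orth X) \<rho>) B)"
    if "is_fact X" for X
    using Nu fact_env_ins[OF Nu.prems is_fact_orth] by (simp only: env_ins_orth[OF that])
  let ?Q = "{Y. is_fact Y \<and> Y \<subseteq> sem (env_ins 0 Y \<rho>) B}"
  have "{X. is_fact X \<and> sem (env_ins 0 X (orth \<circ> \<rho>)) (dual B) \<subseteq> X} = orth ` ?Q"
    by (subst facts_reindex)
      (simp add: dual_body biorth_fact orth_subset_fact_iff is_fact_sem fact_env_ins Nu.prems
        cong: conj_cong)
  then show ?case
    by (simp add: comp_def) (simp add: orth_Union)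
qed simp_all

lemma sem_Mu_unfold: "sem (env_ins 0 (sem \<rho> (Mu B)) \<rho>) B \<subseteq> sem \<rho> (Mu B)"
proof -
  have "sem (env_ins 0 (sem \<rho> (Mu B)) \<rho>) B \<subseteq> X"
    if "is_fact X" and "sem (env_ins 0 X \<rho>) B \<subseteq> X" for X
  proof -
    have "sem \<rho> (Mu B) \<subseteq> X"
      using that by auto
    then have "sem (env_ins 0 (sem \<rho> (Mu B)) \<rho>) B \<subseteq> sem (env_ins 0 X \<rho>) B"
      by (intro sem_mono env_ins_mono) auto
    with that show ?thesis
      by blast
  qed
  then show ?thesis
    by (subst (2) sem.simps) blast
qed

lemma sem_Nu_coinduct: "is_fact X \<Longrightarrow> X \<subseteq> sem (env_ins 0 X \<rho>) B \<Longrightarrow> X \<subseteq> sem \<rho> (Nu B)"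
  using subset_biorth by fastforce

lemma sem_Plus_mono1: "sem \<rho> A \<subseteq> sem \<rho> (Plus A B)"
  and sem_Plus_mono2: "sem \<rho> B \<subseteq> sem \<rho> (Plus A B)"
  using subset_biorth[of "sem \<rho> A \<union> sem \<rho> B"] by auto

definition ctx_sem :: "(nat \<Rightarrow> 'm set) \<Rightarrow> 'a form multiset \<Rightarrow> 'm set" where
  "ctx_sem \<rho> \<Gamma> = (\<Sum>A\<in>#\<Gamma>. orth (sem \<rho> A))"

lemma ctx_sem_empty [simp]: "ctx_sem \<rho> {#} = {0}"
  and ctx_sem_add_mset [simp]: "ctx_sem \<rho> (add_mset A \<Gamma>) = orth (sem \<rho> A) + ctx_sem \<rho> \<Gamma>"
  and ctx_sem_union [simp]: "ctx_sem \<rho> (\<Gamma> + \<Delta>) = ctx_sem \<rho> \<Gamma> + ctx_sem \<rho> \<Delta>"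
  by (simp_all add: ctx_sem_def)

lemma orth_zero: "orth {0} = pole"
  by (simp add: orth_def)

lemma is_fact_pole: "is_fact pole"
  by (metis orth_zero is_fact_orth)

text \<open>Fixed-point variables are self-dual under \<open>dual\<close>, so free ones must be interpreted
  by self-orthogonal facts.\<close>

theorem prov_sound:
  assumes self_dual: "orth \<circ> \<rho> = \<rho>" and "prov \<Gamma>"
  shows "ctx_sem \<rho> \<Gamma> \<subseteq> pole"
  using \<open>prov \<Gamma>\<close>
proof (induction rule: prov.induct)
  have "fact_env \<rho>"
    by (metis fact_env_def is_fact_orth comp_apply self_dual)
  then have fact: "is_fact (sem \<rho> A)" and dual: "sem \<rho> (dual A) = orth (sem \<rho> A)" for A
    by (simp_all add: is_fact_sem flip: sem_dual[of \<rho> A, unfolded self_dual])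
  have valid_iff: "ctx_sem \<rho> (add_mset A \<Delta>) \<subseteq> pole \<longleftrightarrow> ctx_sem \<rho> \<Delta> \<subseteq> sem \<rho> A" for A \<Delta>
    by (simp add: plus_subset_pole_iff biorth_fact[OF fact])
  {
    case (init a)
    show ?case
      by (simp add: plus_subset_pole_iff)
  next
    case (cut A \<Gamma> \<Delta>)
    then have "ctx_sem \<rho> \<Gamma> \<subseteq> sem \<rho> A" and "ctx_sem \<rho> \<Delta> \<subseteq> orth (sem \<rho> A)"
      by (simp_all only: valid_iff dual)
    then have "ctx_sem \<rho> \<Delta> \<subseteq> orth (ctx_sem \<rho> \<Gamma>)"
      using orth_antimono by blast
    then show ?case
      by (simp add: plus_subset_pole_iff)
  next
    case one
    show ?case
      by (simp add: orth_zero biorth_fact[OF is_fact_pole])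
  next
    case (bot \<Gamma>)
    then show ?case
      unfolding valid_iff by (simp add: orth_zero)
  next
    case (top \<Gamma>)
    show ?case
      unfolding valid_iff by simp
  next
    case (tensor A \<Gamma> B \<Delta>)
    then have "ctx_sem \<rho> \<Gamma> + ctx_sem \<rho> \<Delta> \<subseteq> sem \<rho> A + sem \<rho> B"
      unfolding valid_iff by (simp add: set_plus_mono2)
    also have "\<dots> \<subseteq> sem \<rho> (Tensor A B)"
      by (simp add: subset_biorth)
    finally show ?case
      unfolding valid_iff by simp
  next
    case (par A B \<Gamma>)
    then have "(orth (sem \<rho> A) + orth (sem \<rho> B)) + ctx_sem \<rho> \<Gamma> \<subseteq> pole"
      by (simp add: add.assoc)
    then show ?case
      unfolding valid_iff by (simp add: plus_subset_pole_iff)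
  next
    case (with_r A \<Gamma> B)
    then show ?case
      unfolding valid_iff by simp
  next
    case (plus1 A \<Gamma> B)
    then show ?case
      unfolding valid_iff using sem_Plus_mono1 by blast
  next
    case (plus2 B \<Gamma> A)
    then show ?case
      unfolding valid_iff using sem_Plus_mono2 by blast
  next
    case (mu B \<Gamma>)
    have "ctx_sem \<rho> \<Gamma> \<subseteq> sem \<rho> (subst 0 (Mu B) B)"
      using mu.IH unfolding valid_iff .
    also have "\<dots> = sem (env_ins 0 (sem \<rho> (Mu B)) \<rho>) B"
      by (rule sem_subst)
    also have "\<dots> \<subseteq> sem \<rho> (Mu B)"
      by (rule sem_Mu_unfold)
    finally show ?case
      unfolding valid_iff .
  next
    case (nu S \<Gamma> B)
    have "orth (sem \<rho> (subst 0 S B)) \<subseteq> orth (sem \<rho> S)"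
      using nu.IH(2) unfolding valid_iff by (simp add: dual)
    then have "sem \<rho> S \<subseteq> sem (env_ins 0 (sem \<rho> S) \<rho>) B"
      by (simp add: orth_subset_fact_iff fact flip: sem_subst)
    then have "sem \<rho> S \<subseteq> sem \<rho> (Nu B)"
      by (rule sem_Nu_coinduct[OF fact])
    with nu.IH(1) show ?case
      unfolding valid_iff by blast
  }
qed

lemma orth_biorth_plus: "orth (Y + orth (orth X)) = orth (Y + X)"
  using orth_plus_biorth[of X Y] by (simp add: add.commute)

lemma singleton_plus_singleton [simp]: "{x} + {y} = {x + y}"
  by (simp add: set_plus_def)

lemma sem_bigTensor:
  "(\<And>y. y \<in> set ys \<Longrightarrow> sem \<rho> (f y) = orth (orth {g y})) \<Longrightarrow>
    sem \<rho> (bigTensor (map f ys)) = orth (orth {\<Sum>y\<leftarrow>ys. g y})"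
  by (induction ys rule: induct_list012) (simp_all add: orth_plus_biorth orth_biorth_plus)

lemma sem_bigPar:
  "(\<And>y. y \<in> set ys \<Longrightarrow> sem \<rho> (f y) = orth {g y}) \<Longrightarrow>
    sem \<rho> (bigPar (map f ys)) = orth {\<Sum>y\<leftarrow>ys. g y}"
  by (induction ys rule: induct_list012) (simp_all add: orth_plus_biorth orth_biorth_plus)

lemma sem_bigWith: "sem \<rho> (bigWith xs) = (\<Inter>x\<in>set xs. sem \<rho> x)"
  by (induction xs rule: induct_list012) auto

lemma sem_bigPlus_mono: "x \<in> set xs \<Longrightarrow> sem \<rho> x \<subseteq> sem \<rho> (bigPlus xs)"
proof (induction xs rule: induct_list012)
  case (3 y z zs)
  have "sem \<rho> y \<union> sem \<rho> (bigPlus (z # zs)) \<subseteq> sem \<rho> (bigPlus (y # z # zs))"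
    by (simp add: subset_biorth)
  with 3 show ?case
    by auto
qed simp_all

lemma sem_Par_orth_singleton_iff:
  assumes "sem \<rho> A = orth {s}" and "is_fact (sem \<rho> B)"
  shows "x \<in> sem \<rho> (Par A B) \<longleftrightarrow> s + x \<in> sem \<rho> B"
proof -
  have "x \<in> orth ({s} + orth (sem \<rho> B)) \<longleftrightarrow> s + x \<in> orth (orth (sem \<rho> B))"
    by (auto simp: orth_iff set_plus_def ac_simps)
  then show ?thesis
    using assms by (simp add: orth_plus_biorth biorth_fact)
qed

end

section \<open>Transition systems and CTL path operators\<close>

definition agree :: "'a list \<Rightarrow> 'a state \<Rightarrow> 'a state \<Rightarrow> bool" where
  "agree V s t \<longleftrightarrow> (\<forall>a\<in>set V. s a = t a)"

lemma trans_iff_agree: "trans V R s t \<longleftrightarrow> (\<exists>(r, r')\<in>set R. agree V s r \<and> agree V t r')"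
  by (simp add: trans_def agree_def)

lemma trans_if_agree: "(r, r') \<in> set R \<Longrightarrow> agree V s r \<Longrightarrow> trans V R s r'"
  by (auto simp: trans_iff_agree agree_def)

lemma agree_refl [simp]: "agree V s s"
  by (simp add: agree_def)

definition all_until :: "'a list \<Rightarrow> 'a rule list \<Rightarrow> ('a state \<Rightarrow> bool) \<Rightarrow> ('a state \<Rightarrow> bool) \<Rightarrow> 'a state \<Rightarrow> bool" where
  "all_until V R P Q s \<longleftrightarrow> (\<forall>\<pi>. is_path V R s \<pi> \<longrightarrow> (\<exists>i. Q (\<pi> i) \<and> (\<forall>j<i. P (\<pi> j))))"

definition ex_until :: "'a list \<Rightarrow> 'a rule list \<Rightarrow> ('a state \<Rightarrow> bool) \<Rightarrow> ('a state \<Rightarrow> bool) \<Rightarrow> 'a state \<Rightarrow> bool" where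
  "ex_until V R P Q s \<longleftrightarrow> (\<exists>\<pi>. is_path V R s \<pi> \<and> (\<exists>i. Q (\<pi> i) \<and> (\<forall>j<i. P (\<pi> j))))"

definition all_globally :: "'a list \<Rightarrow> 'a rule list \<Rightarrow> ('a state \<Rightarrow> bool) \<Rightarrow> 'a state \<Rightarrow> bool" where
  "all_globally V R P s \<longleftrightarrow> (\<forall>\<pi>. is_path V R s \<pi> \<longrightarrow> (\<forall>i. P (\<pi> i)))"

definition ex_globally :: "'a list \<Rightarrow> 'a rule list \<Rightarrow> ('a state \<Rightarrow> bool) \<Rightarrow> 'a state \<Rightarrow> bool" where
  "ex_globally V R P s \<longleftrightarrow> (\<exists>\<pi>. is_path V R s \<pi> \<and> (\<forall>i. P (\<pi> i)))"

lemma models_path_operators: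
  "models V R s (CAF F) \<longleftrightarrow> all_until V R (\<lambda>_. True) (\<lambda>t. models V R t F) s"
  "models V R s (CEF F) \<longleftrightarrow> ex_until V R (\<lambda>_. True) (\<lambda>t. models V R t F) s"
  "models V R s (CAG F) \<longleftrightarrow> all_globally V R (\<lambda>t. models V R t F) s"
  "models V R s (CEG F) \<longleftrightarrow> ex_globally V R (\<lambda>t. models V R t F) s"
  "models V R s (CAU F G) \<longleftrightarrow> all_until V R (\<lambda>t. models V R t F) (\<lambda>t. models V R t G) s"
  "models V R s (CEU F G) \<longleftrightarrow> ex_until V R (\<lambda>t. models V R t F) (\<lambda>t. models V R t G) s"
  by (simp_all add: all_until_def ex_until_def all_globally_def ex_globally_def)

lemma is_path_0: "is_path V R s \<pi> \<Longrightarrow> \<pi> 0 = s"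
  by (simp add: is_path_def)

lemma is_path_trans: "is_path V R s \<pi> \<Longrightarrow> trans V R s (\<pi> 1)"
  by (metis One_nat_def is_path_def)

lemma is_path_shift: "is_path V R s \<pi> \<Longrightarrow> is_path V R (\<pi> 1) (\<lambda>i. \<pi> (Suc i))"
  by (simp add: is_path_def)

lemma is_path_Cons: "trans V R s t \<Longrightarrow> is_path V R t \<pi> \<Longrightarrow> is_path V R s (case_nat s \<pi>)"
  by (auto simp: is_path_def split: nat.split)

lemma is_path_within:
  assumes "s \<in> S" and "\<And>u. u \<in> S \<Longrightarrow> \<exists>t. trans V R u t \<and> t \<in> S"
  shows "\<exists>\<pi>. is_path V R s \<pi> \<and> (\<forall>i. \<pi> i \<in> S)"
proof -
  obtain \<pi> where "\<forall>n. (\<pi> n \<in> S \<and> (n = 0 \<longrightarrow> \<pi> n = s)) \<and> trans V R (\<pi> n) (\<pi> (Suc n))"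
    using dependent_nat_choice[of "\<lambda>n u. u \<in> S \<and> (n = 0 \<longrightarrow> u = s)" "\<lambda>_. trans V R"] assms
    by blast
  then show ?thesis
    by (auto simp: is_path_def)
qed

lemma serial_is_path: "serial V R \<Longrightarrow> \<exists>\<pi>. is_path V R s \<pi>"
  using is_path_within[of s UNIV] by (auto simp: serial_def)

lemma all_until_induct [consumes 2, case_names goal step]:
  assumes "serial V R" and "all_until V R P Q s"
    and goal: "\<And>u. Q u \<Longrightarrow> X u"
    and step: "\<And>u. P u \<Longrightarrow> (\<And>t. trans V R u t \<Longrightarrow> X t) \<Longrightarrow> X u"
  shows "X s"
proof (rule ccontr)
  let ?S = "{u. all_until V R P Q u \<and> \<not> X u}"
  have "\<exists>t. trans V R u t \<and> t \<in> ?S" if u: "u \<in> ?S" for u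
  proof -
    have not_Q: "\<not> Q u"
      using u goal by blast
    obtain \<pi> where "is_path V R u \<pi>"
      using serial_is_path[OF assms(1)] by blast
    with u not_Q have "P u"
      by (auto simp: all_until_def is_path_0 dest!: spec[of _ \<pi>] elim!: allE[of _ 0] intro: gr0I)
    with u step obtain t where t: "trans V R u t" "\<not> X t"
      by blast
    have "all_until V R P Q t"
      unfolding all_until_def
    proof (intro allI impI)
      fix \<pi>'
      assume "is_path V R t \<pi>'"
      then have "is_path V R u (case_nat u \<pi>')"
        by (rule is_path_Cons[OF t(1)])
      then obtain i where i: "Q (case_nat u \<pi>' i)" "\<forall>j<i. P (case_nat u \<pi>' j)"
        using u by (auto simp: all_until_def)
      with not_Q obtain k where "i = Suc k"
        by (cases i) auto
      with i show "\<exists>i. Q (\<pi>' i) \<and> (\<forall>j<i. P (\<pi>' j))"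
        by (auto intro!: exI[of _ k])
    qed
    with t show ?thesis
      by blast
  qed
  moreover assume "\<not> X s"
  ultimately obtain \<pi> where "is_path V R s \<pi>" and in_S: "\<forall>i. \<pi> i \<in> ?S"
    using is_path_within[of s ?S] assms(2) by blast
  then obtain i where "Q (\<pi> i)"
    using assms(2) by (auto simp: all_until_def)
  with in_S goal show False
    by blast
qed

lemma ex_until_induct [consumes 1, case_names goal step]:
  assumes "ex_until V R P Q s"
    and goal: "\<And>u. Q u \<Longrightarrow> X u"
    and step: "\<And>u t. P u \<Longrightarrow> trans V R u t \<Longrightarrow> X t \<Longrightarrow> X u"
  shows "X s"
proof -
  obtain \<pi> i where "is_path V R s \<pi>" and "Q (\<pi> i)" and "\<forall>j<i. P (\<pi> j)"
    using assms(1) by (auto simp: ex_until_def)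
  then show ?thesis
  proof (induction i arbitrary: s \<pi>)
    case 0
    then show ?case
      using goal by (simp add: is_path_0)
  next
    case (Suc i)
    have "X (\<pi> 1)"
      using Suc.IH[OF is_path_shift[OF Suc.prems(1)]] Suc.prems(2,3) by auto
    moreover have "P s"
      using Suc.prems by (auto simp: is_path_0 dest: spec[of _ 0])
    ultimately show ?case
      using step is_path_trans[OF Suc.prems(1)] by blast
  qed
qed

lemma not_all_until_unfold:
  assumes "\<not> all_until V R P Q s"
  shows "\<not> Q s" and "P s \<Longrightarrow> \<exists>t. trans V R s t \<and> \<not> all_until V R P Q t"
proof -
  obtain \<pi> where path: "is_path V R s \<pi>" and never: "\<forall>i. \<not> (Q (\<pi> i) \<and> (\<forall>j<i. P (\<pi> j)))"
    using assms by (auto simp: all_until_def)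
  show "\<not> Q s"
    using never[rule_format, of 0] by (simp add: is_path_0[OF path])
  assume "P s"
  then have "\<not> (Q (\<pi> (Suc i)) \<and> (\<forall>j<i. P (\<pi> (Suc j))))" for i
    using never[rule_format, of "Suc i"] is_path_0[OF path] by (auto simp: less_Suc_eq_0_disj)
  then have "\<not> all_until V R P Q (\<pi> 1)"
    using is_path_shift[OF path] by (auto simp: all_until_def)
  then show "\<exists>t. trans V R s t \<and> \<not> all_until V R P Q t"
    using is_path_trans[OF path] by blast
qed

lemma not_ex_until_unfold:
  assumes "serial V R" and "\<not> ex_until V R P Q s"
  shows "\<not> Q s" and "P s \<Longrightarrow> trans V R s t \<Longrightarrow> \<not> ex_until V R P Q t"
proof -
  obtain \<pi> where "is_path V R s \<pi>"
    using serial_is_path[OF assms(1)] by blast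
  then show "\<not> Q s"
    using assms(2) is_path_0 by (fastforce simp: ex_until_def)
next
  assume "P s" and "trans V R s t"
  show "\<not> ex_until V R P Q t"
  proof
    assume "ex_until V R P Q t"
    then obtain \<pi> i where "is_path V R t \<pi>" and "Q (\<pi> i)" and "\<forall>j<i. P (\<pi> j)"
      by (auto simp: ex_until_def)
    then have "is_path V R s (case_nat s \<pi>) \<and> Q (case_nat s \<pi> (Suc i)) \<and> (\<forall>j<Suc i. P (case_nat s \<pi> j))"
      using is_path_Cons[OF \<open>trans V R s t\<close>] \<open>P s\<close> by (auto simp: less_Suc_eq_0_disj)
    with assms(2) show False
      unfolding ex_until_def by blast
  qed
qed

lemma all_globally_unfold:
  assumes "serial V R" and "all_globally V R P s"
  shows "P s" and "trans V R s t \<Longrightarrow> all_globally V R P t"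
proof -
  obtain \<pi> where "is_path V R s \<pi>"
    using serial_is_path[OF assms(1)] by blast
  then show "P s"
    using assms(2) is_path_0 by (fastforce simp: all_globally_def)
next
  assume "trans V R s t"
  then have "is_path V R s (case_nat s \<pi>)" if "is_path V R t \<pi>" for \<pi>
    using that by (rule is_path_Cons)
  then show "all_globally V R P t"
    using assms(2) unfolding all_globally_def by (metis nat.case(2))
qed

lemma ex_globally_unfold:
  assumes "ex_globally V R P s"
  shows "P s" and "\<exists>t. trans V R s t \<and> ex_globally V R P t"
proof -
  obtain \<pi> where path: "is_path V R s \<pi>" and always: "\<forall>i. P (\<pi> i)"
    using assms by (auto simp: ex_globally_def)
  show "P s"
    using always is_path_0[OF path] by metis
  show "\<exists>t. trans V R s t \<and> ex_globally V R P t"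
    using is_path_trans[OF path] is_path_shift[OF path] always
    by (auto simp: ex_globally_def)
qed

lemma not_all_globally: "\<not> all_globally V R P s \<Longrightarrow> ex_until V R (\<lambda>_. True) (\<lambda>t. \<not> P t) s"
  by (auto simp: all_globally_def ex_until_def)

lemma not_ex_globally: "\<not> ex_globally V R P s \<Longrightarrow> all_until V R (\<lambda>_. True) (\<lambda>t. \<not> P t) s"
  by (auto simp: ex_globally_def all_until_def)

section \<open>A phase model for states\<close>

text \<open>A resource assigns to every variable the literals and probes placed on it: a literal
  cancels against one probe of the same polarity (\<open>Matched\<close>), copies of literals of one
  polarity accumulate (\<open>Lits\<close>), and every other combination clashes.  The second component
  counts tokens, and two tokens clash.\<close>

datatype slot = Free | Lit bool | Lits bool | Probe bool | Matched | Clash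

instantiation slot :: comm_monoid_add
begin

definition zero_slot :: slot where
  "0 = Free"

fun plus_slot :: "slot \<Rightarrow> slot \<Rightarrow> slot" where
  "plus_slot Free y = y"
| "plus_slot x Free = x"
| "plus_slot (Lit b) (Lit c) = (if b = c then Lits b else Clash)"
| "plus_slot (Lit b) (Lits c) = (if b = c then Lits b else Clash)"
| "plus_slot (Lits b) (Lit c) = (if b = c then Lits b else Clash)"
| "plus_slot (Lits b) (Lits c) = (if b = c then Lits b else Clash)"
| "plus_slot (Lit b) (Probe c) = (if b = c then Matched else Clash)"
| "plus_slot (Probe c) (Lit b) = (if b = c then Matched else Clash)"
| "plus_slot _ _ = Clash"

instance
proof
  fix x y z :: slot
  show "x + y + z = x + (y + z)"
    by (cases x; cases y; cases z) simp_all
  show "x + y = y + x"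
    by (cases x; cases y) simp_all
  show "0 + x = x"
    by (simp add: zero_slot_def)
qed

end

lemma Clash_plus [simp]: "Clash + x = Clash" and plus_Clash [simp]: "x + Clash = Clash"
  by (cases x; simp)+

definition clashes :: "(('a \<Rightarrow> slot) \<times> nat) set" where
  "clashes = {x. (\<exists>a. fst x a = Clash) \<or> 2 \<le> snd x}"

definition lit_res :: "'a \<Rightarrow> bool \<Rightarrow> ('a \<Rightarrow> slot) \<times> nat" where
  "lit_res a b = ((\<lambda>x. if x = a then Lit b else Free), 0)"

interpretation model: phase_space clashes "\<lambda>a. {lit_res a True}" .

lemma clashes_plus: "x \<in> clashes \<Longrightarrow> x + y \<in> clashes"
  by (auto simp: clashes_def) (metis Clash_plus)

lemma clashes_subset_fact: "model.is_fact X \<Longrightarrow> clashes \<subseteq> X"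
  by (metis model.biorth_fact model.orth_iff add.commute clashes_plus subsetI)

definition tokened :: "(('a \<Rightarrow> slot) \<times> nat) set" where
  "tokened = {x. (\<exists>a. fst x a = Clash) \<or> 1 \<le> snd x}"

lemma orth_tokened: "model.orth tokened = tokened" (is "?L = ?R")
proof
  show "?L \<subseteq> ?R"
  proof
    fix y :: "('a \<Rightarrow> slot) \<times> nat"
    assume "y \<in> model.orth tokened"
    moreover have "(0, 1) \<in> (tokened :: (('a \<Rightarrow> slot) \<times> nat) set)"
      by (simp add: tokened_def)
    ultimately have "(0, 1) + y \<in> clashes"
      by (meson model.orth_iff)
    then show "y \<in> tokened"
      by (simp add: clashes_def tokened_def)
  qed
  have "x + y \<in> clashes" if "x \<in> tokened" and "y \<in> tokened" for x y :: "('a \<Rightarrow> slot) \<times> nat"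
    using that by (auto simp: clashes_def tokened_def) (metis Clash_plus plus_Clash)+
  then show "?R \<subseteq> ?L"
    by (auto simp: model.orth_iff)
qed

definition token_env :: "nat \<Rightarrow> (('a \<Rightarrow> slot) \<times> nat) set" where
  "token_env = (\<lambda>_. tokened)"

lemma orth_comp_token_env: "model.orth \<circ> token_env = token_env"
  by (simp add: token_env_def comp_def orth_tokened)

lemma fact_env_token_env: "model.fact_env token_env"
  by (metis orth_comp_token_env comp_apply model.fact_env_def model.is_fact_orth)

lemma sem_token_env_dual: "model.sem token_env (dual A) = model.orth (model.sem token_env A)"
  using model.sem_dual[OF fact_env_token_env, of A] by (simp add: orth_comp_token_env)

lemma Lit_plus_Clash_opposite: "Lit b + u = Clash \<Longrightarrow> Lit (\<not> b) + v = Clash \<Longrightarrow> v + u = Clash"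
  by (cases u; cases v; cases b) (auto split: if_splits)

text \<open>This is why copies of a literal must not clash: otherwise \<open>lit_res a (\<not> b)\<close> would be
  orthogonal to itself, and a probe expecting \<open>\<not> b\<close> to \<open>lit_res a b\<close>, while the two match.\<close>

lemma orth_lit_res: "model.orth {lit_res a b} = model.orth (model.orth {lit_res a (\<not> b)})"
proof
  have "lit_res a (\<not> b) + lit_res a b \<in> clashes"
    by (auto simp: lit_res_def clashes_def)
  then have "{lit_res a b} \<subseteq> model.orth {lit_res a (\<not> b)}"
    by (simp add: model.orth_iff)
  then show "model.orth (model.orth {lit_res a (\<not> b)}) \<subseteq> model.orth {lit_res a b}"
    by (rule model.orth_antimono)
next
  have "x + y \<in> clashes"
    if y: "lit_res a b + y \<in> clashes" and x: "lit_res a (\<not> b) + x \<in> clashes" for x y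
    using x y by (auto simp: lit_res_def clashes_def split: if_splits)
      (metis Lit_plus_Clash_opposite plus_Clash Clash_plus)+
  then show "model.orth {lit_res a b} \<subseteq> model.orth (model.orth {lit_res a (\<not> b)})"
    by (auto simp: model.orth_iff)
qed

lemma sem_lit: "model.sem \<rho> (lit a b) = model.orth (model.orth {lit_res a b})"
  using orth_lit_res[of a True] by (cases b) (simp_all add: lit_def)

lemma sem_lit_orth: "model.sem \<rho> (lit a b) = model.orth {lit_res a (\<not> b)}"
  using orth_lit_res[of a False] by (cases b) (simp_all add: lit_def)

definition state_res :: "'a list \<Rightarrow> 'a state \<Rightarrow> ('a \<Rightarrow> slot) \<times> nat" where
  "state_res V r = ((\<lambda>x. if x \<in> set V then Lit (r x) else Free), 0)"

definition probe :: "'a list \<Rightarrow> 'a state \<Rightarrow> ('a \<Rightarrow> slot) \<times> nat" where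
  "probe V t = ((\<lambda>x. if x \<in> set V then Probe (t x) else Free), 0)"

definition matched :: "'a list \<Rightarrow> ('a \<Rightarrow> slot) \<times> nat" where
  "matched V = ((\<lambda>x. if x \<in> set V then Matched else Free), 0)"

lemma sum_lit_res: "distinct V \<Longrightarrow> (\<Sum>a\<leftarrow>V. lit_res a (r a)) = state_res V r"
  by (induction V) (auto simp: state_res_def lit_res_def zero_prod_def zero_slot_def fun_eq_iff)

lemma state_res_plus_probe: "agree V t r \<Longrightarrow> state_res V r + probe V t = matched V"
  by (auto simp: agree_def state_res_def probe_def matched_def fun_eq_iff)

lemma state_res_plus_probe_clash: "\<not> agree V t r \<Longrightarrow> state_res V r + probe V t \<in> clashes"
  by (auto simp: agree_def state_res_def probe_def clashes_def)

lemma matched_notin_clashes: "matched V \<notin> clashes"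
  by (simp add: matched_def clashes_def)

lemma lit_res_plus_probe_clash: "a \<in> set V \<Longrightarrow> b \<noteq> t a \<Longrightarrow> lit_res a b + probe V t \<in> clashes"
  by (auto simp: lit_res_def probe_def clashes_def)

lemma probe_cong: "agree V s s' \<Longrightarrow> probe V s = probe V s'"
  by (simp add: agree_def probe_def fun_eq_iff)

lemma sem_pos: "distinct V \<Longrightarrow> model.sem \<rho> (pos V r) = model.orth (model.orth {state_res V r})"
  by (simp add: pos_def model.sem_bigTensor sem_lit sum_lit_res)

lemma sem_enc_state: "distinct V \<Longrightarrow> model.sem \<rho> (enc_state V r) = model.orth {state_res V r}"
  by (simp add: enc_state_def model.sem_bigPar sem_lit_orth sum_lit_res)

lemma sem_Par_mono_left: "model.sem \<rho> A \<subseteq> model.sem \<rho> (Par A B)"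
proof
  fix x
  assume x: "x \<in> model.sem \<rho> A"
  have "u + x \<in> clashes" if "u \<in> model.orth (model.sem \<rho> A) + model.orth (model.sem \<rho> B)" for u
  proof -
    from that obtain a b where u: "u = a + b" and a: "a \<in> model.orth (model.sem \<rho> A)"
      by (auto elim: set_plus_elim)
    from x a have "x + a \<in> clashes"
      unfolding model.orth_iff by blast
    then have "(x + a) + b \<in> clashes"
      by (rule clashes_plus)
    then show ?thesis
      by (metis u add.assoc add.commute)
  qed
  then show "x \<in> model.sem \<rho> (Par A B)"
    unfolding model.sem.simps model.orth_iff by blast
qed

lemma sem_bigPar_mono: "x \<in> set xs \<Longrightarrow> model.sem \<rho> x \<subseteq> model.sem \<rho> (bigPar xs)"
proof (induction xs rule: induct_list012)
  case (3 y z zs)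
  have "model.sem \<rho> (Par (bigPar (z # zs)) y) = model.sem \<rho> (Par y (bigPar (z # zs)))"
    by (simp only: model.sem.simps add.commute)
  then have "model.sem \<rho> (bigPar (z # zs)) \<subseteq> model.sem \<rho> (Par y (bigPar (z # zs)))"
    using sem_Par_mono_left[of \<rho> "bigPar (z # zs)" y] by simp
  moreover have "model.sem \<rho> y \<subseteq> model.sem \<rho> (Par y (bigPar (z # zs)))"
    by (rule sem_Par_mono_left)
  ultimately show ?case
    using 3 by auto
qed simp_all

lemma probe_dual_neg: "agree V t r \<Longrightarrow> probe V t \<in> model.sem \<rho> (dual (neg V r))"
proof -
  assume agree: "agree V t r"
  have "probe V t \<in> model.sem \<rho> (Par (lit a (r a)) Zero)" if "a \<in> set V" for a
  proof -
    have "lit_res a (\<not> r a) + probe V t \<in> clashes"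
      using that agree by (intro lit_res_plus_probe_clash) (auto simp: agree_def)
    then have "probe V t \<in> model.sem \<rho> (lit a (r a))"
      by (simp add: sem_lit_orth model.orth_iff)
    then show ?thesis
      using sem_Par_mono_left by blast
  qed
  then show ?thesis
    by (auto simp: dual_neg model.sem_bigWith)
qed

lemma probe_dual_pos_sf:
  assumes "\<not> models V R t (SF p)"
  shows "probe V t \<in> model.sem \<rho> (dual (pos_sf V p))"
proof -
  obtain a b where a: "a \<in> set V" and pa: "p a = Some b" and b: "b \<noteq> t a"
    using assms by fastforce
  have "lit_res a b + probe V t \<in> clashes"
    using a b by (rule lit_res_plus_probe_clash)
  then have "probe V t \<in> model.sem \<rho> (dual (lit a b))"
    by (simp add: sem_lit_orth model.orth_iff)
  moreover have "dual (lit a b) \<in> set (map (\<lambda>a. dual (case p a of None \<Rightarrow> Top | Some b \<Rightarrow> lit a b)) V)"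
    using a pa by force
  ultimately show ?thesis
    unfolding dual_pos_sf using sem_bigPar_mono by blast
qed

lemma probe_Par_enc_state:
  assumes "distinct V" and "model.fact_env \<rho>" and "state_res V r + probe V t \<in> model.sem \<rho> W"
  shows "probe V t \<in> model.sem \<rho> (Par (enc_state V r) W)"
  using assms(3)
  by (simp only: model.sem_Par_orth_singleton_iff[OF sem_enc_state[OF assms(1)] model.is_fact_sem[OF assms(2)]])

lemma probe_Par_enc_state_Tensor:
  assumes "distinct V" and "model.fact_env \<rho>" and "agree V t r" and "probe V r' \<in> model.sem \<rho> Y"
  shows "probe V t \<in> model.sem \<rho> (Par (enc_state V r) (Tensor (pos V r') Y))"
proof (rule probe_Par_enc_state[OF assms(1,2)])
  have "state_res V r' \<in> model.sem \<rho> (pos V r')"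
    using assms(1) model.subset_biorth by (auto simp: sem_pos)
  then have "state_res V r' + probe V r' \<in> model.sem \<rho> (pos V r') + model.sem \<rho> Y"
    using assms(4) by (rule set_plus_intro)
  then have "matched V \<in> model.sem \<rho> (Tensor (pos V r') Y)"
    using model.subset_biorth by (auto simp: state_res_plus_probe)
  then show "state_res V r + probe V t \<in> model.sem \<rho> (Tensor (pos V r') Y)"
    by (simp add: state_res_plus_probe assms(3))
qed

text \<open>On probes, the negations of \<open>TA\<close> and \<open>TE\<close> act as the modalities
  EX and AX.\<close>

lemma probe_dual_TA:
  assumes "distinct V" and "model.fact_env \<rho>"
    and "trans V R t t'" and "probe V t' \<in> model.sem \<rho> (dual Y)"
  shows "probe V t \<in> model.sem \<rho> (dual (TA V R Y))"
proof -
  obtain r r' where rule: "(r, r') \<in> set R" and "agree V t r" and "agree V t' r'"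
    using assms(3) by (auto simp: trans_iff_agree)
  moreover have "probe V r' \<in> model.sem \<rho> (dual Y)"
    using assms(4) \<open>agree V t' r'\<close> by (simp add: probe_cong)
  ultimately have "probe V t \<in>
      model.sem \<rho> (With (dual (neg V r)) (Par (enc_state V r) (Tensor (pos V r') (dual Y))))"
    unfolding model.sem.simps(9) using assms(1,2) by (blast intro: probe_dual_neg probe_Par_enc_state_Tensor)
  moreover have "With (dual (neg V r)) (Par (enc_state V r) (Tensor (pos V r') (dual Y))) \<in> set
      (map (\<lambda>(r, r'). With (dual (neg V r)) (Par (enc_state V r) (Tensor (pos V r') (dual Y)))) R)"
    using rule by force
  ultimately show ?thesis
    unfolding dual_TA using model.sem_bigPlus_mono by blast
qed

lemma probe_dual_TE:
  assumes "distinct V" and "model.fact_env \<rho>"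
    and "\<And>t'. trans V R t t' \<Longrightarrow> probe V t' \<in> model.sem \<rho> (dual Y)"
  shows "probe V t \<in> model.sem \<rho> (dual (TE V R Y))"
  unfolding dual_TE model.sem_bigWith
proof
  fix x
  assume "x \<in> set (map (\<lambda>(r, r'). Par (enc_state V r) (Tensor (pos V r') (dual Y))) R)"
  then obtain r r' where rule: "(r, r') \<in> set R"
    and x: "x = Par (enc_state V r) (Tensor (pos V r') (dual Y))"
    by auto
  have "probe V t \<in> model.sem \<rho> (Par (enc_state V r) (Tensor (pos V r') (dual Y)))"
  proof (cases "agree V t r")
    case True
    then show ?thesis
      using assms trans_if_agree[OF rule] probe_Par_enc_state_Tensor by blast
  next
    case False
    then have "state_res V r + probe V t \<in> model.sem \<rho> (Tensor (pos V r') (dual Y))"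
      using assms(2) state_res_plus_probe_clash clashes_subset_fact model.is_fact_sem by blast
    then show ?thesis
      by (rule probe_Par_enc_state[OF assms(1,2)])
  qed
  then show "probe V t \<in> model.sem \<rho> x"
    by (simp only: x)
qed

section \<open>Refuting probes\<close>

text \<open>The coinduction invariant for refuting a greatest fixed point: the fact generated by the
  probes of all refuted states.\<close>

definition probes_env :: "'a list \<Rightarrow> 'a state set \<Rightarrow> nat \<Rightarrow> (('a \<Rightarrow> slot) \<times> nat) set" where
  "probes_env V T = env_ins 0 (model.orth (model.orth (probe V ` T))) token_env"

lemma fact_env_probes_env: "model.fact_env (probes_env V T)"
  by (simp add: probes_env_def model.fact_env_ins fact_env_token_env)

lemma sem_probes_env_lift: "model.sem (probes_env V T) (lift 0 A) = model.sem token_env A"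
  by (simp add: probes_env_def model.sem_lift)

lemma probe_in_probes_env: "t \<in> T \<Longrightarrow> probe V t \<in> model.sem (probes_env V T) (dual (Var 0))"
  unfolding probes_env_def dual.simps model.sem.simps env_ins_0_0 using model.subset_biorth by blast

lemma probe_in_Nu:
  assumes "\<And>t. t \<in> T \<Longrightarrow> probe V t \<in> model.sem (probes_env V T) B" and "t \<in> T"
  shows "probe V t \<in> model.sem token_env (Nu B)"
proof -
  let ?X = "model.orth (model.orth (probe V ` T))"
  have "probe V ` T \<subseteq> model.sem (probes_env V T) B"
    using assms(1) by blast
  then have "?X \<subseteq> model.orth (model.orth (model.sem (probes_env V T) B))"
    by (rule model.biorth_mono)
  also have "\<dots> = model.sem (probes_env V T) B"
    by (rule model.biorth_fact[OF model.is_fact_sem[OF fact_env_probes_env]])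
  finally have "?X \<subseteq> model.sem (env_ins 0 ?X token_env) B"
    by (simp only: probes_env_def)
  then have "?X \<subseteq> model.sem token_env (Nu B)"
    by (rule model.sem_Nu_coinduct[OF model.is_fact_orth])
  then show ?thesis
    using assms(2) model.subset_biorth by blast
qed

lemma fact_env_ins_sem_Mu: "model.fact_env (env_ins 0 (model.sem token_env (Mu B)) token_env)"
  by (rule model.fact_env_ins[OF fact_env_token_env model.is_fact_sem[OF fact_env_token_env]])

lemma probe_refutes_AF:
  assumes "distinct V"
    and refute_Q: "\<And>t. \<not> Q t \<Longrightarrow> probe V t \<in> model.sem token_env C"
    and "\<not> all_until V R (\<lambda>_. True) Q s"
  shows "probe V s \<in> model.sem token_env (Nu (With (lift 0 C) (dual (TA V R (Var 0)))))"
proof (rule probe_in_Nu)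
  let ?T = "{t. \<not> all_until V R (\<lambda>_. True) Q t}"
  fix t
  assume "t \<in> ?T"
  with not_all_until_unfold[of V R "\<lambda>_. True" Q t] obtain t' where "\<not> Q t" "trans V R t t'" "t' \<in> ?T"
    by auto
  then have "probe V t \<in> model.sem (probes_env V ?T) (dual (TA V R (Var 0)))"
    by (intro probe_dual_TA[OF assms(1) fact_env_probes_env] probe_in_probes_env)
  with \<open>\<not> Q t\<close> show "probe V t \<in> model.sem (probes_env V ?T) (With (lift 0 C) (dual (TA V R (Var 0))))"
    by (simp add: sem_probes_env_lift refute_Q)
qed (use assms(3) in simp)

lemma probe_refutes_AU:
  assumes "distinct V"
    and refute_P: "\<And>t. \<not> P t \<Longrightarrow> probe V t \<in> model.sem token_env A"
    and refute_Q: "\<And>t. \<not> Q t \<Longrightarrow> probe V t \<in> model.sem token_env C"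
    and "\<not> all_until V R P Q s"
  shows "probe V s \<in>
    model.sem token_env (Nu (With (lift 0 C) (Plus (lift 0 A) (dual (TA V R (Var 0))))))"
proof (rule probe_in_Nu)
  let ?T = "{t. \<not> all_until V R P Q t}"
  fix t
  assume "t \<in> ?T"
  then have "\<not> Q t" and step: "P t \<Longrightarrow> \<exists>t'. trans V R t t' \<and> t' \<in> ?T"
    using not_all_until_unfold[of V R P Q t] by auto
  have "probe V t \<in> model.sem (probes_env V ?T) (Plus (lift 0 A) (dual (TA V R (Var 0))))"
  proof (cases "P t")
    case True
    with step obtain t' where "trans V R t t'" and "t' \<in> ?T"
      by blast
    then have "probe V t \<in> model.sem (probes_env V ?T) (dual (TA V R (Var 0)))"
      by (intro probe_dual_TA[OF assms(1) fact_env_probes_env] probe_in_probes_env)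
    then show ?thesis
      using model.sem_Plus_mono2 by blast
  next
    case False
    then have "probe V t \<in> model.sem (probes_env V ?T) (lift 0 A)"
      by (simp add: sem_probes_env_lift refute_P)
    then show ?thesis
      using model.sem_Plus_mono1 by blast
  qed
  with \<open>\<not> Q t\<close> show "probe V t \<in>
      model.sem (probes_env V ?T) (With (lift 0 C) (Plus (lift 0 A) (dual (TA V R (Var 0)))))"
    by (simp add: sem_probes_env_lift refute_Q)
qed (use assms(4) in simp)

lemma probe_refutes_EF:
  assumes "distinct V" and "serial V R"
    and refute_Q: "\<And>t. \<not> Q t \<Longrightarrow> probe V t \<in> model.sem token_env C"
    and "\<not> ex_until V R (\<lambda>_. True) Q s"
  shows "probe V s \<in> model.sem token_env (Nu (With (lift 0 C) (dual (TE V R (Var 0)))))"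
proof (rule probe_in_Nu)
  let ?T = "{t. \<not> ex_until V R (\<lambda>_. True) Q t}"
  fix t
  assume "t \<in> ?T"
  then have "\<not> Q t" and "trans V R t t' \<Longrightarrow> t' \<in> ?T" for t'
    using not_ex_until_unfold[OF assms(2)] by auto
  then have "probe V t \<in> model.sem (probes_env V ?T) (dual (TE V R (Var 0)))"
    by (intro probe_dual_TE[OF assms(1) fact_env_probes_env] probe_in_probes_env)
  with \<open>\<not> Q t\<close> show "probe V t \<in> model.sem (probes_env V ?T) (With (lift 0 C) (dual (TE V R (Var 0))))"
    by (simp add: sem_probes_env_lift refute_Q)
qed (use assms(4) in simp)

lemma probe_refutes_EU:
  assumes "distinct V" and "serial V R"
    and refute_P: "\<And>t. \<not> P t \<Longrightarrow> probe V t \<in> model.sem token_env A"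
    and refute_Q: "\<And>t. \<not> Q t \<Longrightarrow> probe V t \<in> model.sem token_env C"
    and "\<not> ex_until V R P Q s"
  shows "probe V s \<in>
    model.sem token_env (Nu (With (lift 0 C) (Plus (lift 0 A) (dual (TE V R (Var 0))))))"
proof (rule probe_in_Nu)
  let ?T = "{t. \<not> ex_until V R P Q t}"
  fix t
  assume "t \<in> ?T"
  then have "\<not> Q t" and step: "P t \<Longrightarrow> trans V R t t' \<Longrightarrow> t' \<in> ?T" for t'
    using not_ex_until_unfold[OF assms(2)] by auto
  have "probe V t \<in> model.sem (probes_env V ?T) (Plus (lift 0 A) (dual (TE V R (Var 0))))"
  proof (cases "P t")
    case True
    then have "probe V t \<in> model.sem (probes_env V ?T) (dual (TE V R (Var 0)))"
      by (intro probe_dual_TE[OF assms(1) fact_env_probes_env] probe_in_probes_env step)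
    then show ?thesis
      using model.sem_Plus_mono2 by blast
  next
    case False
    then have "probe V t \<in> model.sem (probes_env V ?T) (lift 0 A)"
      by (simp add: sem_probes_env_lift refute_P)
    then show ?thesis
      using model.sem_Plus_mono1 by blast
  qed
  with \<open>\<not> Q t\<close> show "probe V t \<in>
      model.sem (probes_env V ?T) (With (lift 0 C) (Plus (lift 0 A) (dual (TE V R (Var 0)))))"
    by (simp add: sem_probes_env_lift refute_Q)
qed (use assms(5) in simp)

lemma probe_refutes_AG:
  assumes "distinct V"
    and refute_P: "\<And>t. \<not> P t \<Longrightarrow> probe V t \<in> model.sem token_env A"
    and "\<not> all_globally V R P s"
  shows "probe V s \<in> model.sem token_env (Mu (Plus (lift 0 A) (dual (TA V R (Var 0)))))"
    (is "_ \<in> ?L")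
  using not_all_globally[OF assms(3)]
proof (induction rule: ex_until_induct)
  let ?B = "Plus (lift 0 A) (dual (TA V R (Var 0)))"
  {
    case (goal u)
    then have "probe V u \<in> model.sem (env_ins 0 ?L token_env) (lift 0 A)"
      by (simp add: model.sem_lift refute_P)
    then have "probe V u \<in> model.sem (env_ins 0 ?L token_env) ?B"
      using model.sem_Plus_mono1 by blast
    then show ?case
      using model.sem_Mu_unfold by blast
  next
    case (step u t)
    then have "probe V u \<in> model.sem (env_ins 0 ?L token_env) (dual (TA V R (Var 0)))"
      by (intro probe_dual_TA[OF assms(1) fact_env_ins_sem_Mu]) simp_all
    then have "probe V u \<in> model.sem (env_ins 0 ?L token_env) ?B"
      using model.sem_Plus_mono2 by blast
    then show ?case
      using model.sem_Mu_unfold by blast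
  }
qed

lemma probe_refutes_EG:
  assumes "distinct V" and "serial V R"
    and refute_P: "\<And>t. \<not> P t \<Longrightarrow> probe V t \<in> model.sem token_env A"
    and "\<not> ex_globally V R P s"
  shows "probe V s \<in> model.sem token_env (Mu (Plus (lift 0 A) (dual (TE V R (Var 0)))))"
    (is "_ \<in> ?L")
  using assms(2) not_ex_globally[OF assms(4)]
proof (induction rule: all_until_induct)
  let ?B = "Plus (lift 0 A) (dual (TE V R (Var 0)))"
  {
    case (goal u)
    then have "probe V u \<in> model.sem (env_ins 0 ?L token_env) (lift 0 A)"
      by (simp add: model.sem_lift refute_P)
    then have "probe V u \<in> model.sem (env_ins 0 ?L token_env) ?B"
      using model.sem_Plus_mono1 by blast
    then show ?case
      using model.sem_Mu_unfold by blast
  next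
    case (step u)
    then have "probe V u \<in> model.sem (env_ins 0 ?L token_env) (dual (TE V R (Var 0)))"
      by (intro probe_dual_TE[OF assms(1) fact_env_ins_sem_Mu]) simp
    then have "probe V u \<in> model.sem (env_ins 0 ?L token_env) ?B"
      using model.sem_Plus_mono2 by blast
    then show ?case
      using model.sem_Mu_unfold by blast
  }
qed

theorem probe_refutes:
  assumes "distinct V" and "serial V R"
  shows "\<not> models V R t F \<Longrightarrow> probe V t \<in> model.sem token_env (dual (enc V R F))"
proof (induction F arbitrary: t)
  case (SF p)
  then show ?case
    by (simp add: probe_dual_pos_sf)
next
  case (CAnd F G)
  then show ?case
    using model.sem_Plus_mono1 model.sem_Plus_mono2 by fastforce
next
  case (COr F G)
  then show ?case
    by simp
next
  case (CAX F)
  then obtain t' where "trans V R t t'" and "\<not> models V R t' F"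
    by auto
  then show ?case
    by (simp add: CAX.IH probe_dual_TA[OF assms(1) fact_env_token_env])
next
  case (CEX F)
  then show ?case
    by (simp add: CEX.IH probe_dual_TE[OF assms(1) fact_env_token_env])
next
  case (CAF F)
  then have "\<not> all_until V R (\<lambda>_. True) (\<lambda>t. models V R t F) t"
    by (simp only: models_path_operators simp_thms)
  from probe_refutes_AF[OF assms(1) CAF.IH this] show ?case
    by (simp add: dual_lift)
next
  case (CEF F)
  then have "\<not> ex_until V R (\<lambda>_. True) (\<lambda>t. models V R t F) t"
    by (simp only: models_path_operators simp_thms)
  from probe_refutes_EF[OF assms CEF.IH this] show ?case
    by (simp add: dual_lift)
next
  case (CAG F)
  then have "\<not> all_globally V R (\<lambda>t. models V R t F) t"
    by (simp only: models_path_operators simp_thms)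
  from probe_refutes_AG[OF assms(1) CAG.IH this] show ?case
    by (simp add: dual_lift)
next
  case (CEG F)
  then have "\<not> ex_globally V R (\<lambda>t. models V R t F) t"
    by (simp only: models_path_operators simp_thms)
  from probe_refutes_EG[OF assms CEG.IH this] show ?case
    by (simp add: dual_lift)
next
  case (CAU F G)
  then have "\<not> all_until V R (\<lambda>t. models V R t F) (\<lambda>t. models V R t G) t"
    by (simp only: models_path_operators simp_thms)
  from probe_refutes_AU[OF assms(1) CAU.IH this] show ?case
    by (simp add: dual_lift)
next
  case (CEU F G)
  then have "\<not> ex_until V R (\<lambda>t. models V R t F) (\<lambda>t. models V R t G) t"
    by (simp only: models_path_operators simp_thms)
  from probe_refutes_EU[OF assms CEU.IH this] show ?case
    by (simp add: dual_lift)
qed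

theorem models_if_prov:
  assumes "distinct V" and "serial V R" and "prov {# enc_state V s, enc V R F #}"
  shows "models V R s F"
proof (rule ccontr)
  assume "\<not> models V R s F"
  then have "probe V s \<in> model.orth (model.sem token_env (enc V R F))"
    using probe_refutes[OF assms(1,2)] by (simp add: sem_token_env_dual)
  moreover have "state_res V s \<in> model.orth (model.sem token_env (enc_state V s))"
    using model.subset_biorth by (auto simp: sem_enc_state[OF assms(1)])
  ultimately have "state_res V s + (probe V s + 0) \<in> model.ctx_sem token_env {# enc_state V s, enc V R F #}"
    by (auto intro!: set_plus_intro)
  then have "matched V \<in> clashes"
    using model.prov_sound[OF orth_comp_token_env assms(3)] by (auto simp: state_res_plus_probe)
  then show False
    by (simp add: matched_notin_clashes)
qed

section \<open>Provability of true formulas\<close>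

lemma prov_bigPar: "prov (mset xs + \<Gamma>) \<Longrightarrow> prov (add_mset (bigPar xs) \<Gamma>)"
proof (induction xs arbitrary: \<Gamma> rule: induct_list012)
  case 1
  then show ?case
    by (simp add: prov.bot)
next
  case (3 x y zs)
  have "prov (mset (y # zs) + add_mset x \<Gamma>)"
    using "3.prems" by simp
  then have "prov (add_mset (bigPar (y # zs)) (add_mset x \<Gamma>))"
    by (rule "3.IH"(2))
  then show ?case
    by (simp add: prov.par add_mset_commute)
qed simp

lemma prov_bigTensor:
  "(\<And>x. x \<in> set xs \<Longrightarrow> prov {# f x, g x #}) \<Longrightarrow>
    prov (add_mset (bigTensor (map f xs)) (mset (map g xs)))"
proof (induction xs rule: induct_list012)
  case 1
  then show ?case
    by (simp add: prov.one)
next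
  case (3 x y zs)
  then have "prov (add_mset (Tensor (f x) (bigTensor (map f (y # zs)))) ({# g x #} + mset (map g (y # zs))))"
    by (intro prov.tensor) simp_all
  then show ?case
    by (simp add: add_mset_commute)
qed simp

lemma prov_bigPlus: "x \<in> set xs \<Longrightarrow> prov (add_mset x \<Gamma>) \<Longrightarrow> prov (add_mset (bigPlus xs) \<Gamma>)"
  by (induction xs rule: induct_list012) (auto intro: prov.plus1 prov.plus2)

lemma prov_bigWith: "(\<And>x. x \<in> set xs \<Longrightarrow> prov (add_mset x \<Gamma>)) \<Longrightarrow> prov (add_mset (bigWith xs) \<Gamma>)"
  by (induction xs rule: induct_list012) (simp_all add: prov.top prov.with_r)

lemma prov_lit: "prov {# lit a b, lit a (\<not> b) #}"
  by (cases b) (simp_all add: lit_def add_mset_commute prov.init)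

definition state_ctx :: "'a list \<Rightarrow> 'a state \<Rightarrow> 'a form multiset" where
  "state_ctx V s = mset (map (\<lambda>a. dual (lit a (s a))) V)"

lemma prov_enc_stateI: "prov (add_mset A (state_ctx V s)) \<Longrightarrow> prov {# A, enc_state V s #}"
  using prov_bigPar[of "map (\<lambda>a. dual (lit a (s a))) V" "{# A #}"]
  by (simp add: state_ctx_def enc_state_def add_mset_commute)

lemma prov_pos_state_ctx: "agree V s r \<Longrightarrow> prov (add_mset (pos V r) (state_ctx V s))"
  unfolding pos_def state_ctx_def by (rule prov_bigTensor) (auto simp: agree_def prov_lit)

lemma prov_pos_sf_state_ctx: "models V R s (SF p) \<Longrightarrow> prov (add_mset (pos_sf V p) (state_ctx V s))"
  unfolding pos_sf_def state_ctx_def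
  by (rule prov_bigTensor) (auto simp: prov_lit prov.top split: option.split)

lemma prov_neg_state_ctx: "\<not> agree V s r \<Longrightarrow> prov (add_mset (neg V r) (state_ctx V s))"
proof -
  assume "\<not> agree V s r"
  then obtain a where a: "a \<in> set V" and differ: "s a \<noteq> r a"
    by (auto simp: agree_def)
  then obtain V1 V2 where V: "V = V1 @ a # V2"
    by (meson split_list)
  have "prov {# lit a (\<not> r a), lit a (\<not> s a) #}"
    using differ prov_lit[of a "\<not> r a"] by simp
  then have "prov (add_mset (Tensor (lit a (\<not> r a)) Top)
      ({# lit a (\<not> s a) #} + mset (map (\<lambda>a. dual (lit a (s a))) (V1 @ V2))))"
    by (intro prov.tensor prov.top) simp_all
  then have "prov (add_mset (Tensor (dual (lit a (r a))) Top) (state_ctx V s))"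
    by (simp add: state_ctx_def V)
  then show ?thesis
    unfolding neg_def using a by (intro prov_bigPlus[where x = "Tensor (dual (lit a (r a))) Top"]) auto
qed

lemma enc_state_cong: "agree V s s' \<Longrightarrow> enc_state V s = enc_state V s'"
  unfolding enc_state_def agree_def by (intro arg_cong[where f = bigPar] map_cong) simp_all

lemma prov_TA:
  assumes "\<And>t. trans V R s t \<Longrightarrow> prov {# Y, enc_state V t #}"
  shows "prov {# TA V R Y, enc_state V s #}"
proof (rule prov_enc_stateI)
  show "prov (add_mset (TA V R Y) (state_ctx V s))"
    unfolding TA_def
  proof (rule prov_bigWith, clarsimp)
    fix r r'
    assume rule: "(r, r') \<in> set R"
    show "prov (add_mset (Plus (neg V r) (Tensor (pos V r) (Par (enc_state V r') Y))) (state_ctx V s))"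
    proof (cases "agree V s r")
      case True
      have "prov {# Y, enc_state V r' #}"
        using assms trans_if_agree[OF rule True] by blast
      then have "prov {# Par (enc_state V r') Y #}"
        using prov.par[of "enc_state V r'" Y "{#}"] by (simp add: add_mset_commute)
      then have "prov (add_mset (Tensor (pos V r) (Par (enc_state V r') Y)) (state_ctx V s + {#}))"
        by (intro prov.tensor prov_pos_state_ctx True) simp
      then show ?thesis
        by (simp add: prov.plus2)
    next
      case False
      then show ?thesis
        by (simp add: prov.plus1 prov_neg_state_ctx)
    qed
  qed
qed

lemma prov_TE:
  assumes "trans V R s t" and "prov {# Y, enc_state V t #}"
  shows "prov {# TE V R Y, enc_state V s #}"
proof (rule prov_enc_stateI)
  obtain r r' where rule: "(r, r') \<in> set R" and "agree V s r" and "agree V t r'"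
    using assms(1) by (auto simp: trans_iff_agree)
  then have "prov {# Par (enc_state V r') Y #}"
    using assms(2) prov.par[of "enc_state V r'" Y "{#}"] by (simp add: add_mset_commute enc_state_cong)
  then have "prov (add_mset (Tensor (pos V r) (Par (enc_state V r') Y)) (state_ctx V s + {#}))"
    by (intro prov.tensor prov_pos_state_ctx \<open>agree V s r\<close>) simp
  then show "prov (add_mset (TE V R Y) (state_ctx V s))"
    unfolding TE_def using rule by (intro prov_bigPlus[where x = "Tensor (pos V r) (Par (enc_state V r') Y)"]) force+
qed

fun all_states :: "'a list \<Rightarrow> 'a state list" where
  "all_states [] = [\<lambda>_. False]"
| "all_states (a # V) = concat (map (\<lambda>s. [s(a := True), s(a := False)]) (all_states V))"

lemma all_states_cover: "\<exists>u\<in>set (all_states V). agree V u s"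
proof (induction V)
  case (Cons a V)
  then obtain u where "u \<in> set (all_states V)" and "agree V u s"
    by blast
  then have "u(a := s a) \<in> set (all_states (a # V))" and "agree (a # V) (u(a := s a)) s"
    by (cases "s a"; auto simp: agree_def)+
  then show ?case
    by blast
qed (simp add: agree_def)

text \<open>States are observed only on \<open>V\<close>, so finitely many of them represent all states
  satisfying \<open>P\<close> up to agreement on \<open>V\<close>.\<close>

definition enc_states :: "'a list \<Rightarrow> ('a state \<Rightarrow> bool) \<Rightarrow> 'a form" where
  "enc_states V P = bigPlus (map (pos V) (filter (\<lambda>u. \<exists>w. agree V u w \<and> P w) (all_states V)))"

lemma prov_enc_states: "P w \<Longrightarrow> prov {# enc_states V P, enc_state V w #}"
proof -
  assume "P w"
  obtain u where u: "u \<in> set (all_states V)" and "agree V u w"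
    using all_states_cover by blast
  then have "agree V w u"
    by (simp add: agree_def)
  then have "prov {# pos V u, enc_state V w #}"
    by (intro prov_enc_stateI prov_pos_state_ctx)
  moreover have "pos V u \<in> set (map (pos V) (filter (\<lambda>u. \<exists>w. agree V u w \<and> P w) (all_states V)))"
    using u \<open>agree V u w\<close> \<open>P w\<close> by auto
  ultimately show ?thesis
    unfolding enc_states_def by (simp add: prov_bigPlus)
qed

lemma prov_Nu_invariant:
  assumes "\<And>u. P u \<Longrightarrow> prov {# subst 0 (enc_states V P) B, enc_state V u #}" and "P s"
  shows "prov {# Nu B, enc_state V s #}"
proof (rule prov.nu)
  show "prov {# enc_states V P, enc_state V s #}"
    using assms(2) by (rule prov_enc_states)
  have "prov {# enc_state V u, subst 0 (enc_states V P) B #}" if "agree V u w" and "P w" for u w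
    using assms(1)[OF \<open>P w\<close>] enc_state_cong[OF that(1)] by (simp add: add_mset_commute)
  then have "prov (add_mset (bigWith (map (enc_state V) (filter (\<lambda>u. \<exists>w. agree V u w \<and> P w) (all_states V))))
      {# subst 0 (enc_states V P) B #})"
    by (intro prov_bigWith) auto
  then show "prov {# dual (enc_states V P), subst 0 (enc_states V P) B #}"
    by (simp add: enc_states_def dual_bigPlus dual_pos comp_def)
qed

lemma prov_AF:
  assumes "serial V R" and "all_until V R (\<lambda>_. True) Q s"
    and prov_Q: "\<And>t. Q t \<Longrightarrow> prov {# C, enc_state V t #}"
  shows "prov {# Mu (Plus (lift 0 C) (TA V R (Var 0))), enc_state V s #}"
  using assms(1,2)
proof (induction rule: all_until_induct)
  case (goal u)
  then show ?case
    by (intro prov.mu) (simp add: prov.plus1 prov_Q)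
next
  case (step u)
  then show ?case
    by (intro prov.mu) (simp add: prov.plus2 prov_TA)
qed

lemma prov_AU:
  assumes "serial V R" and "all_until V R P Q s"
    and prov_P: "\<And>t. P t \<Longrightarrow> prov {# A, enc_state V t #}"
    and prov_Q: "\<And>t. Q t \<Longrightarrow> prov {# C, enc_state V t #}"
  shows "prov {# Mu (Plus (lift 0 C) (With (lift 0 A) (TA V R (Var 0)))), enc_state V s #}"
  using assms(1,2)
proof (induction rule: all_until_induct)
  case (goal u)
  then show ?case
    by (intro prov.mu) (simp add: prov.plus1 prov_Q)
next
  case (step u)
  then show ?case
    by (intro prov.mu) (simp add: prov.plus2 prov.with_r prov_P prov_TA)
qed

lemma prov_EF:
  assumes "ex_until V R (\<lambda>_. True) Q s"
    and prov_Q: "\<And>t. Q t \<Longrightarrow> prov {# C, enc_state V t #}"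
  shows "prov {# Mu (Plus (lift 0 C) (TE V R (Var 0))), enc_state V s #}"
  using assms(1)
proof (induction rule: ex_until_induct)
  case (goal u)
  then show ?case
    by (intro prov.mu) (simp add: prov.plus1 prov_Q)
next
  case (step u t)
  then show ?case
    by (intro prov.mu) (simp add: prov.plus2 prov_TE)
qed

lemma prov_EU:
  assumes "ex_until V R P Q s"
    and prov_P: "\<And>t. P t \<Longrightarrow> prov {# A, enc_state V t #}"
    and prov_Q: "\<And>t. Q t \<Longrightarrow> prov {# C, enc_state V t #}"
  shows "prov {# Mu (Plus (lift 0 C) (With (lift 0 A) (TE V R (Var 0)))), enc_state V s #}"
  using assms(1)
proof (induction rule: ex_until_induct)
  case (goal u)
  then show ?case
    by (intro prov.mu) (simp add: prov.plus1 prov_Q)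
next
  case (step u t)
  then show ?case
    by (intro prov.mu) (simp add: prov.plus2 prov.with_r prov_P prov_TE)
qed

lemma prov_AG:
  assumes "serial V R" and "all_globally V R P s"
    and prov_P: "\<And>t. P t \<Longrightarrow> prov {# A, enc_state V t #}"
  shows "prov {# Nu (With (lift 0 A) (TA V R (Var 0))), enc_state V s #}"
proof (rule prov_Nu_invariant[where P = "all_globally V R P"])
  fix u
  assume u: "all_globally V R P u"
  have "prov {# TA V R (enc_states V (all_globally V R P)), enc_state V u #}"
    by (intro prov_TA prov_enc_states all_globally_unfold(2)[OF assms(1) u])
  with all_globally_unfold(1)[OF assms(1) u]
  show "prov {# subst 0 (enc_states V (all_globally V R P)) (With (lift 0 A) (TA V R (Var 0))),
      enc_state V u #}"
    by (simp add: prov.with_r prov_P)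
qed (rule assms(2))

lemma prov_EG:
  assumes "ex_globally V R P s"
    and prov_P: "\<And>t. P t \<Longrightarrow> prov {# A, enc_state V t #}"
  shows "prov {# Nu (With (lift 0 A) (TE V R (Var 0))), enc_state V s #}"
proof (rule prov_Nu_invariant[where P = "ex_globally V R P"])
  fix u
  assume u: "ex_globally V R P u"
  then obtain t where "trans V R u t" and "ex_globally V R P t"
    using ex_globally_unfold(2) by blast
  then have "prov {# TE V R (enc_states V (ex_globally V R P)), enc_state V u #}"
    by (intro prov_TE prov_enc_states)
  with ex_globally_unfold(1)[OF u]
  show "prov {# subst 0 (enc_states V (ex_globally V R P)) (With (lift 0 A) (TE V R (Var 0))),
      enc_state V u #}"
    by (simp add: prov.with_r prov_P)
qed (rule assms(1))

theorem prov_if_models: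
  assumes "serial V R"
  shows "models V R s F \<Longrightarrow> prov {# enc V R F, enc_state V s #}"
proof (induction F arbitrary: s)
  case (SF p)
  then show ?case
    by (simp add: prov_enc_stateI prov_pos_sf_state_ctx)
next
  case (CAnd F G)
  then show ?case
    by (simp add: prov.with_r)
next
  case (COr F G)
  then show ?case
    by (auto intro: prov.plus1 prov.plus2)
next
  case (CAX F)
  then show ?case
    by (simp add: prov_TA)
next
  case (CEX F)
  then show ?case
    by (auto intro: prov_TE)
next
  case (CAF F)
  then have "all_until V R (\<lambda>_. True) (\<lambda>t. models V R t F) s"
    by (simp only: models_path_operators)
  from prov_AF[OF assms this CAF.IH] show ?case
    by simp
next
  case (CEF F)
  then have "ex_until V R (\<lambda>_. True) (\<lambda>t. models V R t F) s"
    by (simp only: models_path_operators)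
  from prov_EF[OF this CEF.IH] show ?case
    by simp
next
  case (CAG F)
  then have "all_globally V R (\<lambda>t. models V R t F) s"
    by (simp only: models_path_operators)
  from prov_AG[OF assms this CAG.IH] show ?case
    by simp
next
  case (CEG F)
  then have "ex_globally V R (\<lambda>t. models V R t F) s"
    by (simp only: models_path_operators)
  from prov_EG[OF this CEG.IH] show ?case
    by simp
next
  case (CAU F G)
  then have "all_until V R (\<lambda>t. models V R t F) (\<lambda>t. models V R t G) s"
    by (simp only: models_path_operators)
  from prov_AU[OF assms this CAU.IH] show ?case
    by simp
next
  case (CEU F G)
  then have "ex_until V R (\<lambda>t. models V R t F) (\<lambda>t. models V R t G) s"
    by (simp only: models_path_operators)
  from prov_EU[OF this CEU.IH] show ?case
    by simp
qed

theorem theorem5: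
  fixes V :: "'a list" and R :: "'a rule list" and F :: "'a ctl" and s :: "'a state"
  assumes "distinct V"
    and "serial V R"
  shows "models V R s F \<longleftrightarrow> prov {# enc_state V s, enc V R F #}"
proof
  assume "models V R s F"
  then have "prov {# enc V R F, enc_state V s #}"
    by (rule prov_if_models[OF assms(2)])
  then show "prov {# enc_state V s, enc V R F #}"
    by (simp add: add_mset_commute)
next
  assume "prov {# enc_state V s, enc V R F #}"
  then show "models V R s F"
    by (rule models_if_prov[OF assms])
qed

end
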